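(* Under the hierarchical comparison model described in the context, with $0<q_0(\mathbf K)<1$ and $Q(\mathbf Y\mid\mathbf K)>Q(\mathbf Y,E_0\mid\mathbf K)$, the Bayes factor of $E_0$ against $E_1$ satisfies $$ \frac{P(\mathbf Y\mid E_0,\mathbf K)}{P(\mathbf Y\mid E_1,\mathbf K)} = \frac{1-q_0(\mathbf K)}{q_0(\mathbf K)}\;\frac{Q(\mathbf Y,E_0\mid\mathbf K)}{Q(\mathbf Y\mid\mathbf K)-Q(\mathbf Y,E_0\mid\mathbf K)}, $$ with $Q(\mathbf Y\mid\mathbf K)=\prod_{\ell=1}^I[A_\ell^{K^\ell}]_{1,n+1}$, $Q(\mathbf Y,E_0\mid\mathbf K)=\sum_{t=2}^{n}\prod_{\ell=1}^I[A_\ell^{k_\ell}]_{1,t}[A_\ell^{K^\ell-k_\ell}]_{t,n+1}$, and $q_0(\mathbf K)=\sum_{t=2}^{n}\prod_{\ell=1}^I\binom{t-2}{k_\ell-1}\binom{n-t}{K^\ell-k_\ell-1}\big/\binom{n-1}{K^\ell-1}$. In particular the ratio does not depend on the prior probability $p_0(\mathbf K)\in(0,1)$.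
   Context: For integers $i<j$ write $[\![i,j[\![=\{i,\dots,j-1\}$. A partition of $[\![1,n+1[\![$ into $K$ non-empty segments is $m=(\tau_0,\dots,\tau_K)$ with $1=\tau_0<\tau_1<\dots<\tau_K=n+1$; its segments are $[\![\tau_{k-1},\tau_k[\![$ and $\tau_k$ is its $k$-th change-point. $\mathcal M_K^{1,n+1}$ is the set of such partitions. We have $I$ series $\mathbf Y=(Y^1,\dots,Y^I)$, each of length $n$, with partitions $\mathbf m=(m^1,\dots,m^I)$, $m^\ell\in\mathcal M_{K^\ell}^{1,n+1}$, and $\tau^\ell_k$ the $k$-th change-point of $m^\ell$; fix indices $1\le k_\ell\le K^\ell-1$. Let $\mathcal M_{\mathbf K}^{1,n+1}=\prod_\ell\mathcal M_{K^\ell}^{1,n+1}$. Define the event $E_0=\{\tau^1_{k_1}=\dots=\tau^I_{k_I}\}$, $E_1$ its complement, and $E=\mathbb 1\{E_1\}$. Hierarchical model: $E\sim$ Bernoulli$(1-p_0(\mathbf K))$ with $p_0(\mathbf K)=P(E_0\mid\mathbf K)\in(0,1)$ a given prior probability; given $E$, $\mathbf m$ is uniform on $\mathcal M_{\mathbf K}^{1,n+1}\cap E_0$ if $E=0$ and uniform on $\mathcal M_{\mathbf K}^{1,n+1}\cap E_1$ if $E=1$; independently, for each series $\ell$ and each segment $J$ of $m^\ell$, a parameter $\theta^\ell_J$ is drawn independently from a prior $P(\theta)$; given $\mathbf m$ and the parameters, all $Y^\ell_t$ are independent with $Y^\ell_t\sim\mathcal G(\theta^\ell_J,\phi^\ell)$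 for $t\in J\in m^\ell$, $\phi^\ell$ known. For series $\ell$, $A_\ell$ is the $(n+1)\times(n+1)$ matrix with $[A_\ell]_{i,j}=\int\prod_{t\in[\![i,j[\![}P(Y^\ell_t\mid\theta)\,P(\theta)\,d\theta$ for $1\le i<j\le n+1$ and $0$ otherwise; $A_\ell^j$ denotes its $j$-th matrix power. Binomial coefficients $\binom{a}{b}$ are $0$ when $b<0$ or $b>a$. *)

theory Defs
  imports "HOL-Probability.Probability"
begin

text \<open>Segment marginal likelihood matrix A_l (entries indexed 1..n+1).
  M is the prior distribution of theta, f t theta = P(Y^l_t | theta) for the fixed data.\<close>
definition Amat :: "nat \<Rightarrow> 'a measure \<Rightarrow> (nat \<Rightarrow> 'a \<Rightarrow> real) \<Rightarrow> nat \<Rightarrow> nat \<Rightarrow> real" where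
  "Amat n M f i j =
     (if 1 \<le> i \<and> i < j \<and> j \<le> n + 1 then (\<integral>\<theta>. (\<Prod>t\<in>{i..<j}. f t \<theta>) \<partial>M) else 0)"

fun mpow :: "nat \<Rightarrow> (nat \<Rightarrow> nat \<Rightarrow> real) \<Rightarrow> nat \<Rightarrow> nat \<Rightarrow> nat \<Rightarrow> real" where
  "mpow N A 0 i j = (if i = j then 1 else 0)"
| "mpow N A (Suc p) i j = (\<Sum>h\<in>{1..N}. mpow N A p i h * A h j)"

definition partitions :: "nat \<Rightarrow> nat \<Rightarrow> (nat \<Rightarrow> nat) set" where
  "partitions n K = {\<tau>. \<tau> 0 = 1 \<and> \<tau> K = n + 1 \<and> (\<forall>k<K. \<tau> k < \<tau> (Suc k)) \<and> (\<forall>k>K. \<tau> k = 0)}"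

definition multipart :: "nat \<Rightarrow> nat \<Rightarrow> (nat \<Rightarrow> nat) \<Rightarrow> (nat \<Rightarrow> nat \<Rightarrow> nat) set" where
  "multipart I n K = PiE {1..I} (\<lambda>l. partitions n (K l))"

definition E0set :: "nat \<Rightarrow> (nat \<Rightarrow> nat) \<Rightarrow> (nat \<Rightarrow> nat \<Rightarrow> nat) set" where
  "E0set I k = {m. \<forall>l\<in>{1..I}. \<forall>l'\<in>{1..I}. m l (k l) = m l' (k l')}"

definition lik_m :: "nat \<Rightarrow> 'a measure \<Rightarrow> (nat \<Rightarrow> nat \<Rightarrow> 'a \<Rightarrow> real) \<Rightarrow> nat \<Rightarrow> (nat \<Rightarrow> nat)
     \<Rightarrow> (nat \<Rightarrow> nat \<Rightarrow> nat) \<Rightarrow> real" where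
  "lik_m n M f I K m = (\<Prod>l\<in>{1..I}. \<Prod>j\<in>{1..K l}. Amat n M (f l) (m l (j - 1)) (m l j))"

definition prior_m :: "real \<Rightarrow> nat \<Rightarrow> nat \<Rightarrow> (nat \<Rightarrow> nat) \<Rightarrow> (nat \<Rightarrow> nat) \<Rightarrow> (nat \<Rightarrow> nat \<Rightarrow> nat) \<Rightarrow> real" where
  "prior_m p0 I n K k m =
     (if m \<in> multipart I n K \<inter> E0set I k then p0 / card (multipart I n K \<inter> E0set I k)
      else if m \<in> multipart I n K - E0set I k then (1 - p0) / card (multipart I n K - E0set I k)
      else 0)"

definition PY_E0 :: "real \<Rightarrow> nat \<Rightarrow> nat \<Rightarrow> (nat \<Rightarrow> nat) \<Rightarrow> (nat \<Rightarrow> nat) \<Rightarrow> 'a measure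
     \<Rightarrow> (nat \<Rightarrow> nat \<Rightarrow> 'a \<Rightarrow> real) \<Rightarrow> real" where
  "PY_E0 p0 I n K k M f =
     (let S = multipart I n K \<inter> E0set I k in
      (\<Sum>m\<in>S. prior_m p0 I n K k m * lik_m n M f I K m) / (\<Sum>m\<in>S. prior_m p0 I n K k m))"

definition PY_E1 :: "real \<Rightarrow> nat \<Rightarrow> nat \<Rightarrow> (nat \<Rightarrow> nat) \<Rightarrow> (nat \<Rightarrow> nat) \<Rightarrow> 'a measure
     \<Rightarrow> (nat \<Rightarrow> nat \<Rightarrow> 'a \<Rightarrow> real) \<Rightarrow> real" where
  "PY_E1 p0 I n K k M f =
     (let S = multipart I n K - E0set I k in
      (\<Sum>m\<in>S. prior_m p0 I n K k m * lik_m n M f I K m) / (\<Sum>m\<in>S. prior_m p0 I n K k m))"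

definition QY :: "nat \<Rightarrow> nat \<Rightarrow> (nat \<Rightarrow> nat) \<Rightarrow> 'a measure \<Rightarrow> (nat \<Rightarrow> nat \<Rightarrow> 'a \<Rightarrow> real) \<Rightarrow> real" where
  "QY I n K M f = (\<Prod>l\<in>{1..I}. mpow (n + 1) (Amat n M (f l)) (K l) 1 (n + 1))"

definition QYE0 :: "nat \<Rightarrow> nat \<Rightarrow> (nat \<Rightarrow> nat) \<Rightarrow> (nat \<Rightarrow> nat) \<Rightarrow> 'a measure
     \<Rightarrow> (nat \<Rightarrow> nat \<Rightarrow> 'a \<Rightarrow> real) \<Rightarrow> real" where
  "QYE0 I n K k M f = (\<Sum>t\<in>{2..n}. \<Prod>l\<in>{1..I}.
      mpow (n + 1) (Amat n M (f l)) (k l) 1 t * mpow (n + 1) (Amat n M (f l)) (K l - k l) t (n + 1))"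

definition q0 :: "nat \<Rightarrow> nat \<Rightarrow> (nat \<Rightarrow> nat) \<Rightarrow> (nat \<Rightarrow> nat) \<Rightarrow> real" where
  "q0 I n K k = (\<Sum>t\<in>{2..n}. \<Prod>l\<in>{1..I}.
      real ((t - 2) choose (k l - 1)) * real ((n - t) choose (K l - k l - 1))
      / real ((n - 1) choose (K l - 1)))"

end

theory Submission
  imports Defs
begin

text \<open>A segmentation is a path of length K in the "change-point graph" on {1..n+1}, whose edges
  i \<rightarrow> j (i < j) are weighted by the segment marginal likelihood [A]_{i,j}.  Summing
  path weights over all segmentations therefore yields the entry [A^K]_{1,n+1}; fixing the k-th
  change-point at t splits the sum into [A^k]_{1,t} [A^(K-k)]_{t,n+1}.  Replacing A by the
  0/1 matrix of all edges turns these sums into the cardinalities of the corresponding sets of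
  segmentations, which gives q0 as the prior fraction of configurations in E0.  Since the
  prior is uniform on E0 and on E1, each conditional likelihood is an average, and the Bayes
  factor follows by arithmetic.\<close>

definition segmentations :: "nat \<Rightarrow> nat \<Rightarrow> nat \<Rightarrow> (nat \<Rightarrow> nat) set" where
  "segmentations a b K =
     {\<tau>. \<tau> 0 = a \<and> \<tau> K = b \<and> (\<forall>k<K. \<tau> k < \<tau> (Suc k)) \<and> (\<forall>k>K. \<tau> k = 0)}"

lemma partitions_eq_segmentations: "partitions n K = segmentations 1 (n + 1) K"
  unfolding partitions_def segmentations_def by simp

lemma segmentations_0: "segmentations a b 0 = (if a = b then {(\<lambda>k. 0)(0 := a)} else {})"
  by (auto simp: segmentations_def fun_eq_iff)

lemma less_of_step_less:
  fixes \<tau> :: "nat \<Rightarrow> nat"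
  assumes "\<forall>k<K. \<tau> k < \<tau> (Suc k)" "x < y" "y \<le> K"
  shows "\<tau> x < \<tau> y"
  using assms(2,3)
proof (induction y)
  case (Suc y)
  then have "\<tau> y < \<tau> (Suc y)" using assms(1) by simp
  with Suc show ?case by (cases "x = y") auto
qed simp

lemma segmentations_less:
  "\<tau> \<in> segmentations a b K \<Longrightarrow> x < y \<Longrightarrow> y \<le> K \<Longrightarrow> \<tau> x < \<tau> y"
  using less_of_step_less[of K \<tau> x y] by (simp add: segmentations_def)

lemma segmentations_le:
  "\<tau> \<in> segmentations a b K \<Longrightarrow> x \<le> y \<Longrightarrow> y \<le> K \<Longrightarrow> \<tau> x \<le> \<tau> y"
  using segmentations_less[of \<tau> a b K x y] by (cases "x = y") auto

lemma finite_segmentations: "finite (segmentations a b K)"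
proof (rule finite_subset)
  show "segmentations a b K \<subseteq> {\<tau>. \<forall>x. (x \<in> {..K} \<longrightarrow> \<tau> x \<in> {..b}) \<and> (x \<notin> {..K} \<longrightarrow> \<tau> x = 0)}"
    using segmentations_le[of _ a b K _ K] by (auto simp: segmentations_def)
  show "finite {\<tau>. \<forall>x. (x \<in> {..K} \<longrightarrow> \<tau> x \<in> {..b}) \<and> (x \<notin> {..K} \<longrightarrow> \<tau> x = (0::nat))}"
    by (rule finite_set_of_finite_funs) auto
qed

definition segmentation_weight :: "(nat \<Rightarrow> nat \<Rightarrow> real) \<Rightarrow> nat \<Rightarrow> (nat \<Rightarrow> nat) \<Rightarrow> real" where
  "segmentation_weight B K \<tau> = (\<Prod>j\<in>{1..K}. B (\<tau> (j - 1)) (\<tau> j))"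

lemma segmentation_weight_Suc:
  "segmentation_weight B (Suc K) \<tau> = segmentation_weight B K (\<tau>(Suc K := c)) * B (\<tau> K) (\<tau> (Suc K))"
proof -
  have "segmentation_weight B K (\<tau>(Suc K := c)) = segmentation_weight B K \<tau>"
    unfolding segmentation_weight_def by (rule prod.cong) auto
  then show ?thesis
    unfolding segmentation_weight_def by (simp add: prod.nat_ivl_Suc' mult.commute)
qed

lemma sum_segmentations_Suc:
  assumes Q_upd: "\<And>\<tau> c. Q (\<tau>(Suc K := c)) = Q \<tau>"
  shows "(\<Sum>\<tau>\<in>{\<tau>\<in>segmentations a b (Suc K). Q \<tau>}. segmentation_weight B (Suc K) \<tau>)
       = (\<Sum>h<b. (\<Sum>\<sigma>\<in>{\<sigma>\<in>segmentations a h K. Q \<sigma>}. segmentation_weight B K \<sigma>) * B h b)"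
proof -
  let ?S = "{\<tau>\<in>segmentations a b (Suc K). Q \<tau>}"
  let ?T = "SIGMA h:{..<b}. {\<sigma>\<in>segmentations a h K. Q \<sigma>}"
  have "(\<Sum>\<tau>\<in>?S. segmentation_weight B (Suc K) \<tau>)
      = (\<Sum>(h, \<sigma>)\<in>?T. segmentation_weight B K \<sigma> * B h b)"
  proof (rule sum.reindex_bij_witness[where j = "\<lambda>\<tau>. (\<tau> K, \<tau>(Suc K := 0))"
        and i = "\<lambda>(h, \<sigma>). \<sigma>(Suc K := b)"])
    fix \<tau> assume "\<tau> \<in> ?S"
    then have \<tau>: "\<tau> 0 = a" "\<tau> (Suc K) = b" "\<forall>k<Suc K. \<tau> k < \<tau> (Suc k)"
      "\<forall>k>Suc K. \<tau> k = 0" "Q \<tau>"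
      by (auto simp: segmentations_def)
    then show "(case (\<tau> K, \<tau>(Suc K := 0)) of (h, \<sigma>) \<Rightarrow> \<sigma>(Suc K := b)) = \<tau>"
      by auto
    from \<tau> show "(\<tau> K, \<tau>(Suc K := 0)) \<in> ?T"
      by (auto simp: segmentations_def Q_upd Suc_lessI)
    from \<tau>(2) show "(case (\<tau> K, \<tau>(Suc K := 0)) of (h, \<sigma>) \<Rightarrow> segmentation_weight B K \<sigma> * B h b)
        = segmentation_weight B (Suc K) \<tau>"
      by (simp add: segmentation_weight_Suc[of B K \<tau> 0])
  next
    fix p assume "p \<in> ?T"
    then obtain h \<sigma> where p: "p = (h, \<sigma>)" "h < b" "\<sigma> \<in> segmentations a h K" "Q \<sigma>"
      by auto
    then show "(\<lambda>\<tau>. (\<tau> K, \<tau>(Suc K := 0))) ((\<lambda>(h, \<sigma>). \<sigma>(Suc K := b)) p) = p"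
      by (auto simp: segmentations_def fun_eq_iff)
    from p show "(\<lambda>(h, \<sigma>). \<sigma>(Suc K := b)) p \<in> ?S"
      by (auto simp: segmentations_def Q_upd less_Suc_eq)
  qed
  also have "\<dots> = (\<Sum>h<b. (\<Sum>\<sigma>\<in>{\<sigma>\<in>segmentations a h K. Q \<sigma>}. segmentation_weight B K \<sigma>) * B h b)"
    by (subst sum.Sigma[symmetric]) (auto simp: sum_distrib_right finite_segmentations)
  finally show ?thesis .
qed

definition strictly_upper :: "nat \<Rightarrow> (nat \<Rightarrow> nat \<Rightarrow> real) \<Rightarrow> bool" where
  "strictly_upper N B \<longleftrightarrow> (\<forall>i j. B i j \<noteq> 0 \<longrightarrow> 1 \<le> i \<and> i < j \<and> j \<le> N)"

lemma mpow_Suc_strictly_upper: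
  assumes "strictly_upper N B"
  shows "mpow N B (Suc p) i j = (\<Sum>h<j. mpow N B p i h * B h j)"
proof -
  have nz: "1 \<le> h \<and> h < j \<and> j \<le> N" if "B h j \<noteq> 0" for h
    using assms that unfolding strictly_upper_def by blast
  have "mpow N B (Suc p) i j = (\<Sum>h\<in>{1..N} \<inter> {..<j}. mpow N B p i h * B h j)"
    by (simp, rule sum.mono_neutral_right) (auto dest: nz)
  also have "\<dots> = (\<Sum>h<j. mpow N B p i h * B h j)"
    by (rule sum.mono_neutral_left) (auto dest: nz)
  finally show ?thesis .
qed

lemma sum_segmentation_weight:
  assumes "strictly_upper N B"
  shows "(\<Sum>\<tau>\<in>segmentations a b K. segmentation_weight B K \<tau>) = mpow N B K a b"
proof (induction K arbitrary: b)
  case 0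
  then show ?case by (simp add: segmentations_0 segmentation_weight_def)
next
  case (Suc K)
  have "(\<Sum>\<tau>\<in>segmentations a b (Suc K). segmentation_weight B (Suc K) \<tau>)
      = (\<Sum>h<b. (\<Sum>\<sigma>\<in>segmentations a h K. segmentation_weight B K \<sigma>) * B h b)"
    using sum_segmentations_Suc[where Q="\<lambda>_. True" and K=K and a=a and b=b and B=B] by simp
  then show ?case
    by (simp add: Suc.IH mpow_Suc_strictly_upper[OF assms] del: mpow.simps)
qed

lemma sum_segmentation_weight_through:
  assumes "strictly_upper N B" "k \<le> K"
  shows "(\<Sum>\<tau>\<in>{\<tau>\<in>segmentations a b K. \<tau> k = t}. segmentation_weight B K \<tau>)
       = mpow N B k a t * mpow N B (K - k) t b"
  using assms(2)
proof (induction K arbitrary: b)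
  case 0
  then have "{\<tau>\<in>segmentations a b 0. \<tau> k = t} = (if t = b then segmentations a b 0 else {})"
    by (auto simp: segmentations_def)
  with 0 show ?case using sum_segmentation_weight[OF assms(1), where a=a and b=b and K=0] by simp
next
  case (Suc K)
  show ?case
  proof (cases "k = Suc K")
    case True
    then have "{\<tau>\<in>segmentations a b (Suc K). \<tau> k = t} = (if t = b then segmentations a b (Suc K) else {})"
      by (auto simp: segmentations_def)
    with True show ?thesis using sum_segmentation_weight[OF assms(1), where a=a and b=b and K="Suc K"] by simp
  next
    case False
    then have "k \<le> K" using Suc.prems by simp
    have "(\<Sum>\<tau>\<in>{\<tau>\<in>segmentations a b (Suc K). \<tau> k = t}. segmentation_weight B (Suc K) \<tau>)
        = (\<Sum>h<b. (\<Sum>\<sigma>\<in>{\<sigma>\<in>segmentations a h K. \<sigma> k = t}. segmentation_weight B K \<sigma>) * B h b)"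
      using False by (intro sum_segmentations_Suc) auto
    also have "\<dots> = mpow N B k a t * (\<Sum>h<b. mpow N B (K - k) t h * B h b)"
      by (simp add: Suc.IH[OF \<open>k \<le> K\<close>] sum_distrib_left mult.assoc)
    also have "\<dots> = mpow N B k a t * mpow N B (Suc K - k) t b"
      using \<open>k \<le> K\<close> by (simp add: mpow_Suc_strictly_upper[OF assms(1)] Suc_diff_le del: mpow.simps)
    finally show ?thesis .
  qed
qed

definition ones_upper :: "nat \<Rightarrow> nat \<Rightarrow> nat \<Rightarrow> real" where
  "ones_upper N i j = (if 1 \<le> i \<and> i < j \<and> j \<le> N then 1 else 0)"

lemma strictly_upper_ones_upper: "strictly_upper N (ones_upper N)"
  by (simp add: strictly_upper_def ones_upper_def)

lemma sum_lessThan_choose: "(\<Sum>m<x. m choose k) = x choose Suc k"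
  by (induction x) auto

lemma mpow_ones_upper:
  assumes "1 \<le> i" "j \<le> N"
  shows "mpow N (ones_upper N) (Suc k) i j = (if i < j then real ((j - i - 1) choose k) else 0)"
  using assms(2)
proof (induction k arbitrary: j)
  case 0
  have "mpow N (ones_upper N) (Suc 0) i j = (\<Sum>h<j. (if i = h then 1 else 0) * ones_upper N h j)"
    by (subst mpow_Suc_strictly_upper[OF strictly_upper_ones_upper]) simp
  also have "\<dots> = (if i < j then ones_upper N i j else 0)"
    by (simp add: if_distrib[of "\<lambda>x. x * _"] cong: if_cong)
  finally show ?case using 0 assms(1) by (simp add: ones_upper_def)
next
  case (Suc k)
  have "mpow N (ones_upper N) (Suc (Suc k)) i j = (\<Sum>h<j. mpow N (ones_upper N) (Suc k) i h * ones_upper N h j)"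
    by (rule mpow_Suc_strictly_upper[OF strictly_upper_ones_upper])
  also have "\<dots> = (\<Sum>h<j. (if i < h then real ((h - i - 1) choose k) else 0) * ones_upper N h j)"
    using Suc by (intro sum.cong) auto
  also have "\<dots> = (\<Sum>h\<in>{Suc i..<j}. real ((h - i - 1) choose k))"
    using Suc.prems assms(1) by (intro sum.mono_neutral_cong_right) (auto simp: ones_upper_def)
  also have "\<dots> = (\<Sum>m<j - Suc i. real (m choose k))"
    by (rule sum.reindex_bij_witness[where i = "\<lambda>m. m + Suc i" and j = "\<lambda>h. h - Suc i"]) auto
  finally show ?case
    by (simp add: sum_lessThan_choose flip: of_nat_sum)
qed

lemma segmentation_weight_ones_upper:
  assumes "\<tau> \<in> segmentations a b K" "1 \<le> a" "b \<le> N"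
  shows "segmentation_weight (ones_upper N) K \<tau> = 1"
  unfolding segmentation_weight_def
proof (rule prod.neutral, rule ballI)
  fix j assume j: "j \<in> {1..K}"
  have "a \<le> \<tau> (j - 1)" "\<tau> (j - 1) < \<tau> j" "\<tau> j \<le> b"
    using segmentations_le[OF assms(1), of 0 "j - 1"] segmentations_less[OF assms(1), of "j - 1" j]
      segmentations_le[OF assms(1), of j K] assms(1) j
    by (auto simp: segmentations_def)
  then show "ones_upper N (\<tau> (j - 1)) (\<tau> j) = 1"
    using assms(2,3) by (simp add: ones_upper_def)
qed

lemma multipart_eq_PiE: "multipart I n K = PiE {1..I} (\<lambda>l. segmentations 1 (n + 1) (K l))"
  by (simp add: multipart_def partitions_eq_segmentations)

lemma finite_multipart: "finite (multipart I n K)"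
  by (simp add: multipart_eq_PiE finite_segmentations finite_PiE)

lemma sum_multipart_weight:
  assumes "\<forall>l\<in>{1..I}. strictly_upper (n + 1) (B l)"
  shows "(\<Sum>m\<in>multipart I n K. \<Prod>l\<in>{1..I}. segmentation_weight (B l) (K l) (m l))
       = (\<Prod>l\<in>{1..I}. mpow (n + 1) (B l) (K l) 1 (n + 1))"
proof -
  have "(\<Prod>l\<in>{1..I}. mpow (n + 1) (B l) (K l) 1 (n + 1))
      = (\<Prod>l\<in>{1..I}. \<Sum>\<tau>\<in>segmentations 1 (n + 1) (K l). segmentation_weight (B l) (K l) \<tau>)"
    using assms by (intro prod.cong refl sum_segmentation_weight[symmetric]) auto
  also have "\<dots> = (\<Sum>m\<in>multipart I n K. \<Prod>l\<in>{1..I}. segmentation_weight (B l) (K l) (m l))"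
    unfolding multipart_eq_PiE by (rule prod_sum_PiE) (simp_all add: finite_segmentations)
  finally show ?thesis ..
qed

lemma multipart_Int_E0set:
  assumes "1 \<le> I" "\<forall>l\<in>{1..I}. 1 \<le> k l \<and> k l < K l"
  shows "multipart I n K \<inter> E0set I k
       = (\<Union>t\<in>{2..n}. PiE {1..I} (\<lambda>l. {\<tau>\<in>segmentations 1 (n + 1) (K l). \<tau> (k l) = t}))"
    (is "?S0 = (\<Union>t\<in>{2..n}. ?A t)")
proof (intro equalityI subsetI)
  fix m assume m: "m \<in> ?S0"
  then have mP: "m \<in> PiE {1..I} (\<lambda>l. segmentations 1 (n + 1) (K l))"
    by (simp add: multipart_eq_PiE)
  have one: "1 \<in> {1..I}" using assms(1) by simp
  have m1: "m 1 \<in> segmentations 1 (n + 1) (K 1)" using PiE_mem[OF mP one] .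
  have "1 \<le> k 1" "k 1 < K 1" using assms(2) one by auto
  then have "m 1 0 < m 1 (k 1)" "m 1 (k 1) < m 1 (K 1)"
    using segmentations_less[OF m1] by auto
  with m1 have "m 1 (k 1) \<in> {2..n}" by (auto simp: segmentations_def)
  moreover have "m \<in> ?A (m 1 (k 1))"
    using m mP one unfolding PiE_iff E0set_def by blast
  ultimately show "m \<in> (\<Union>t\<in>{2..n}. ?A t)" by blast
next
  fix m assume "m \<in> (\<Union>t\<in>{2..n}. ?A t)"
  then show "m \<in> ?S0"
    by (auto simp: multipart_eq_PiE E0set_def PiE_iff)
qed

lemma sum_multipart_E0set_weight:
  assumes "1 \<le> I" "\<forall>l\<in>{1..I}. 1 \<le> k l \<and> k l < K l"
    and "\<forall>l\<in>{1..I}. strictly_upper (n + 1) (B l)"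
  shows "(\<Sum>m\<in>multipart I n K \<inter> E0set I k. \<Prod>l\<in>{1..I}. segmentation_weight (B l) (K l) (m l))
       = (\<Sum>t\<in>{2..n}. \<Prod>l\<in>{1..I}. mpow (n + 1) (B l) (k l) 1 t * mpow (n + 1) (B l) (K l - k l) t (n + 1))"
proof -
  let ?A = "\<lambda>t. PiE {1..I} (\<lambda>l. {\<tau>\<in>segmentations 1 (n + 1) (K l). \<tau> (k l) = t})"
  have fin: "finite (?A t)" for t
    by (simp add: finite_segmentations finite_PiE)
  have disj: "?A t \<inter> ?A t' = {}" if "t \<noteq> t'" for t t'
    using that assms(1) by (fastforce simp: PiE_iff)
  have "(\<Sum>m\<in>multipart I n K \<inter> E0set I k. \<Prod>l\<in>{1..I}. segmentation_weight (B l) (K l) (m l))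
      = (\<Sum>t\<in>{2..n}. \<Sum>m\<in>?A t. \<Prod>l\<in>{1..I}. segmentation_weight (B l) (K l) (m l))"
    unfolding multipart_Int_E0set[OF assms(1,2)] using fin disj by (intro sum.UNION_disjoint) auto
  also have "\<dots> = (\<Sum>t\<in>{2..n}. \<Prod>l\<in>{1..I}.
      \<Sum>\<tau>\<in>{\<tau>\<in>segmentations 1 (n + 1) (K l). \<tau> (k l) = t}. segmentation_weight (B l) (K l) \<tau>)"
    by (intro sum.cong refl prod_sum_PiE[symmetric]) (simp_all add: finite_segmentations)
  also have "\<dots> = (\<Sum>t\<in>{2..n}. \<Prod>l\<in>{1..I}. mpow (n + 1) (B l) (k l) 1 t * mpow (n + 1) (B l) (K l - k l) t (n + 1))"
    using assms(2,3) by (intro sum.cong prod.cong refl sum_segmentation_weight_through) (auto intro: less_imp_le)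
  finally show ?thesis .
qed

lemma card_eq_sum_weight_ones_upper:
  assumes "S \<subseteq> multipart I n K"
  shows "real (card S) = (\<Sum>m\<in>S. \<Prod>l\<in>{1..I}. segmentation_weight (ones_upper (n + 1)) (K l) (m l))"
proof -
  have "segmentation_weight (ones_upper (n + 1)) (K l) (m l) = 1" if "m \<in> S" "l \<in> {1..I}" for m l
    using that assms
    by (intro segmentation_weight_ones_upper[where a = 1 and b = "n + 1"])
       (auto simp: multipart_eq_PiE PiE_iff)
  then show ?thesis by simp
qed

lemma card_multipart:
  assumes "0 < n" "\<forall>l\<in>{1..I}. 0 < K l"
  shows "real (card (multipart I n K)) = (\<Prod>l\<in>{1..I}. real ((n - 1) choose (K l - 1)))"
proof -
  have "real (card (multipart I n K)) = (\<Prod>l\<in>{1..I}. mpow (n + 1) (ones_upper (n + 1)) (K l) 1 (n + 1))"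
    unfolding card_eq_sum_weight_ones_upper[OF subset_refl]
    by (rule sum_multipart_weight) (simp add: strictly_upper_ones_upper)
  also have "\<dots> = (\<Prod>l\<in>{1..I}. real ((n - 1) choose (K l - 1)))"
  proof (rule prod.cong[OF refl])
    fix l assume "l \<in> {1..I}"
    then have K: "K l = Suc (K l - 1)" using assms(2) by simp
    show "mpow (n + 1) (ones_upper (n + 1)) (K l) 1 (n + 1) = real ((n - 1) choose (K l - 1))"
      using mpow_ones_upper[of 1 "n + 1" "n + 1" "K l - 1", folded K] assms(1) by simp
  qed
  finally show ?thesis .
qed

lemma card_multipart_Int_E0set:
  assumes "1 \<le> I" "\<forall>l\<in>{1..I}. 1 \<le> k l \<and> k l < K l"
  shows "real (card (multipart I n K \<inter> E0set I k))
       = (\<Sum>t\<in>{2..n}. \<Prod>l\<in>{1..I}. real ((t - 2) choose (k l - 1)) * real ((n - t) choose (K l - k l - 1)))"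
proof -
  have "real (card (multipart I n K \<inter> E0set I k))
      = (\<Sum>t\<in>{2..n}. \<Prod>l\<in>{1..I}. mpow (n + 1) (ones_upper (n + 1)) (k l) 1 t
                                    * mpow (n + 1) (ones_upper (n + 1)) (K l - k l) t (n + 1))"
    unfolding card_eq_sum_weight_ones_upper[OF Int_lower1]
    using assms by (rule sum_multipart_E0set_weight) (simp add: strictly_upper_ones_upper)
  also have "\<dots> = (\<Sum>t\<in>{2..n}. \<Prod>l\<in>{1..I}. real ((t - 2) choose (k l - 1)) * real ((n - t) choose (K l - k l - 1)))"
  proof (intro sum.cong prod.cong refl)
    fix t l assume t: "t \<in> {2..n}" and l: "l \<in> {1..I}"
    have "1 \<le> k l" "k l < K l" using assms(2) l by auto
    then have k: "k l = Suc (k l - 1)" and Kk: "K l - k l = Suc (K l - k l - 1)" by simp_all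
    show "mpow (n + 1) (ones_upper (n + 1)) (k l) 1 t * mpow (n + 1) (ones_upper (n + 1)) (K l - k l) t (n + 1)
        = real ((t - 2) choose (k l - 1)) * real ((n - t) choose (K l - k l - 1))"
      using mpow_ones_upper[of 1 t "n + 1" "k l - 1", folded k]
        mpow_ones_upper[of t "n + 1" "n + 1" "K l - k l - 1", folded Kk] t
      by (simp add: numeral_2_eq_2)
  qed
  finally show ?thesis .
qed

lemma q0_eq_card_ratio:
  assumes "1 \<le> I" "\<forall>l\<in>{1..I}. 1 \<le> k l \<and> k l < K l \<and> K l \<le> n"
  shows "q0 I n K k = card (multipart I n K \<inter> E0set I k) / card (multipart I n K)"
proof -
  have "1 \<le> k 1 \<and> k 1 < K 1 \<and> K 1 \<le> n" using assms by simp
  then have "0 < n" by linarith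
  have "\<forall>l\<in>{1..I}. 0 < K l" "\<forall>l\<in>{1..I}. 1 \<le> k l \<and> k l < K l" using assms(2) by auto
  then show ?thesis
    unfolding q0_def using card_multipart[OF \<open>0 < n\<close>] card_multipart_Int_E0set[OF assms(1)]
    by (simp add: prod_dividef sum_divide_distrib)
qed

lemma lik_m_eq_prod_weight:
  "lik_m n M f I K m = (\<Prod>l\<in>{1..I}. segmentation_weight (Amat n M (f l)) (K l) (m l))"
  by (simp add: lik_m_def segmentation_weight_def)

lemma QY_eq_sum_lik_m: "QY I n K M f = (\<Sum>m\<in>multipart I n K. lik_m n M f I K m)"
  unfolding QY_def lik_m_eq_prod_weight
  by (rule sum_multipart_weight[symmetric]) (auto simp: strictly_upper_def Amat_def)

lemma QYE0_eq_sum_lik_m: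
  assumes "1 \<le> I" "\<forall>l\<in>{1..I}. 1 \<le> k l \<and> k l < K l"
  shows "QYE0 I n K k M f = (\<Sum>m\<in>multipart I n K \<inter> E0set I k. lik_m n M f I K m)"
  unfolding QYE0_def lik_m_eq_prod_weight
  using assms by (rule sum_multipart_E0set_weight[symmetric]) (auto simp: strictly_upper_def Amat_def)

lemma PY_E0_eq_average:
  assumes "p0 \<noteq> 0"
  shows "PY_E0 p0 I n K k M f
       = (\<Sum>m\<in>multipart I n K \<inter> E0set I k. lik_m n M f I K m) / card (multipart I n K \<inter> E0set I k)"
proof -
  let ?S = "multipart I n K \<inter> E0set I k"
  have "prior_m p0 I n K k m = p0 / card ?S" if "m \<in> ?S" for m
    using that by (simp add: prior_m_def)
  then have "(\<Sum>m\<in>?S. prior_m p0 I n K k m * lik_m n M f I K m) = p0 / card ?S * (\<Sum>m\<in>?S. lik_m n M f I K m)"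
      and "(\<Sum>m\<in>?S. prior_m p0 I n K k m) = card ?S * (p0 / card ?S)"
    by (simp_all add: sum_distrib_left)
  then show ?thesis
    unfolding PY_E0_def Let_def using assms by (cases "card ?S = 0") auto
qed

lemma PY_E1_eq_average:
  assumes "p0 \<noteq> 1"
  shows "PY_E1 p0 I n K k M f
       = (\<Sum>m\<in>multipart I n K - E0set I k. lik_m n M f I K m) / card (multipart I n K - E0set I k)"
proof -
  let ?S = "multipart I n K - E0set I k"
  have "prior_m p0 I n K k m = (1 - p0) / card ?S" if "m \<in> ?S" for m
    using that by (simp add: prior_m_def)
  then have "(\<Sum>m\<in>?S. prior_m p0 I n K k m * lik_m n M f I K m) = (1 - p0) / card ?S * (\<Sum>m\<in>?S. lik_m n M f I K m)"
      and "(\<Sum>m\<in>?S. prior_m p0 I n K k m) = card ?S * ((1 - p0) / card ?S)"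
    by (simp_all add: sum_distrib_left)
  then show ?thesis
    unfolding PY_E1_def Let_def using assms by (cases "card ?S = 0") auto
qed

lemma divide_averages_eq:
  fixes c0 c1 L0 L1 :: real
  assumes "0 \<le> c0" "0 \<le> c1"
  shows "(L0 / c0) / (L1 / c1) = (1 - c0 / (c0 + c1)) / (c0 / (c0 + c1)) * (L0 / L1)"
proof (cases "c0 = 0 \<or> c1 = 0")
  case False
  with assms have "0 < c0 + c1" by simp
  then have "1 - c0 / (c0 + c1) = c1 / (c0 + c1)"
    by (simp add: field_simps)
  with \<open>0 < c0 + c1\<close> have "(1 - c0 / (c0 + c1)) / (c0 / (c0 + c1)) = c1 / c0"
    by simp
  then show ?thesis
    by (simp only:) (simp add: field_simps)
qed auto

text \<open>Thanks to the convention x / 0 = 0 the identity also holds in the degenerate cases.\<close>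
theorem mainTheorem4:
  fixes I n :: nat and K k :: "nat \<Rightarrow> nat" and p0 :: real
    and M :: "'a measure" and f :: "nat \<Rightarrow> nat \<Rightarrow> 'a \<Rightarrow> real"
  assumes "1 \<le> I"
    and "\<forall>l\<in>{1..I}. 1 \<le> k l \<and> k l \<le> K l - 1 \<and> K l \<le> n"
    and "prob_space M"
    and "0 < p0" and "p0 < 1"
    and "0 < q0 I n K k" and "q0 I n K k < 1"
    and "QY I n K M f > QYE0 I n K k M f"
  shows "PY_E0 p0 I n K k M f / PY_E1 p0 I n K k M f
       = (1 - q0 I n K k) / q0 I n K k * (QYE0 I n K k M f / (QY I n K M f - QYE0 I n K k M f))"
proof -
  let ?S = "multipart I n K" and ?S0 = "multipart I n K \<inter> E0set I k" and ?S1 = "multipart I n K - E0set I k"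
  let ?L = "lik_m n M f I K"
  have k: "\<forall>l\<in>{1..I}. 1 \<le> k l \<and> k l < K l \<and> K l \<le> n"
    using assms(2) by fastforce
  then have k': "\<forall>l\<in>{1..I}. 1 \<le> k l \<and> k l < K l"
    by blast
  have "q0 I n K k = card ?S0 / (card ?S0 + card ?S1)"
    using q0_eq_card_ratio[OF assms(1) k] card_Int_Diff[OF finite_multipart] by simp
  moreover have "QY I n K M f = sum ?L ?S0 + sum ?L ?S1"
    unfolding QY_eq_sum_lik_m by (rule sum.Int_Diff[OF finite_multipart])
  ultimately show ?thesis
    using assms(4,5) divide_averages_eq[of "card ?S0" "card ?S1" "sum ?L ?S0" "sum ?L ?S1"]
    by (simp add: PY_E0_eq_average PY_E1_eq_average QYE0_eq_sum_lik_m[OF assms(1) k'])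
qed

end
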